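(* Let $\mathbf a_0,\dots,\mathbf a_{n+1}\in Q$ satisfy $|\langle\mathbf a_j,\mathbf a_k\rangle-1|<1$ for all $j,k$. Then $$\sum_{j=0}^{n+1}(-1)^jF(\mathbf a_0,\dots,\widehat{\mathbf a_j},\dots,\mathbf a_{n+1})=0,$$ where the hat denotes omission.
   Context: $\mathbb C^{n+1}$ carries the bilinear form $\langle\mathbf z,\mathbf w\rangle=\sum_{j=0}^nz_jw_j$ and $Q=\{\mathbf z\in\mathbb C^{n+1}:\langle\mathbf z,\mathbf z\rangle=1\}$. Let $\Omega\subset Q^{n+1}$ be the set of $(\mathbf a_0,\dots,\mathbf a_n)$, $\mathbf a_j\in Q$, with $|\langle\mathbf a_j,\mathbf a_k\rangle-1|<1$ for all $j,k$. For $(\mathbf a_0,\dots,\mathbf a_n)\in\Omega$, let $A$ be the $(n+1)\times(n+1)$ matrix with columns $\mathbf a_0,\dots,\mathbf a_n$ and $$F(\mathbf a_0,\dots,\mathbf a_n)=\det A\int_{t_0,\dots,t_n\ge0}\exp\Bigl(-\sum_{j,k=0}^n\langle\mathbf a_j,\mathbf a_k\rangle t_jt_k\Bigr)dt_0\cdots dt_n$$ (this integral converges on $\Omega$ and $F$ is holomorphic there). *)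

theory Defs
  imports "HOL-Analysis.Analysis" "Jordan_Normal_Form.Determinant"
begin

text \<open>Vectors of C^(n+1) are encoded as functions nat => complex, only components 0..n matter.\<close>

definition bf :: "nat \<Rightarrow> (nat \<Rightarrow> complex) \<Rightarrow> (nat \<Rightarrow> complex) \<Rightarrow> complex" where
  "bf n z w = (\<Sum>i\<le>n. z i * w i)"

definition Qset :: "nat \<Rightarrow> (nat \<Rightarrow> complex) set" where
  "Qset n = {z. bf n z z = 1}"

definition Fint :: "nat \<Rightarrow> (nat \<Rightarrow> nat \<Rightarrow> complex) \<Rightarrow> complex" where
  "Fint n a = Determinant.det (mat (Suc n) (Suc n) (\<lambda>(i, j). a j i)) *
     set_lebesgue_integral (PiM {..n} (\<lambda>_. lborel)) (PiE {..n} (\<lambda>_. {0..}))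
       (\<lambda>t. exp (- (\<Sum>j\<le>n. \<Sum>k\<le>n. bf n (a j) (a k) * complex_of_real (t j * t k))))"

definition omit :: "nat \<Rightarrow> (nat \<Rightarrow> 'a) \<Rightarrow> nat \<Rightarrow> 'a" where
  "omit j a = (\<lambda>k. if k < j then a k else a (Suc k))"

end

theory Submission
  imports Defs "HOL-Probability.Sinc_Integral"
begin

text \<open>Write g k l = \<langle>a k, a l\<rangle> and let D j be the determinant of the matrix whose columns are
  a 0, \<dots>, a (n+1) with a j left out. Expanding a determinant with a repeated row along that row
  gives (\<Sum>j. (-1)^j D j a j) = 0, hence (\<Sum>j. (-1)^j D j g j l) = 0 for every l.
  The Gaussian f t = exp (- (\<Sum>k l. g k l t k t l)) satisfies \<partial>f/\<partial>t j = -2 (\<Sum>l. g j l t l) f t,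
  so (\<Sum>j. (-1)^j D j \<partial>f/\<partial>t j) = 0. Integrating \<partial>f/\<partial>t j over the orthant [0,\<infinity>)^(n+2), first in
  t j, gives minus the integral of f over the face t j = 0, and D j times that face integral is F with
  a j omitted. The hypothesis |g k l - 1| < 1 is used only through Re (g k l) > 0, which makes f decay
  like exp (-c (\<Sum>k. t k)^2) on the orthant.\<close>

lemma distr_PiM_bij_betw:
  fixes M :: "'a measure" and e :: "'i \<Rightarrow> 'j"
  assumes M: "sigma_finite_measure M" and e: "bij_betw e I J" and I: "finite I"
  shows "distr (PiM J (\<lambda>_. M)) (PiM I (\<lambda>_. M)) (\<lambda>x. \<lambda>i\<in>I. x (e i)) = PiM I (\<lambda>_. M)"
proof -
  interpret PI: product_sigma_finite "\<lambda>_::'i. M"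
    using M by (simp add: product_sigma_finite_def)
  interpret PJ: product_sigma_finite "\<lambda>_::'j. M"
    using M by (simp add: product_sigma_finite_def)
  have J: "finite J" using e I bij_betw_finite by blast
  have inv: "\<And>k. k \<in> J \<Longrightarrow> inv_into I e k \<in> I \<and> e (inv_into I e k) = k"
    using e bij_betw_inv_into_right[OF e] by (auto simp: bij_betw_def intro: inv_into_into)
  have meas: "(\<lambda>x. \<lambda>i\<in>I. x (e i)) \<in> PiM J (\<lambda>_. M) \<rightarrow>\<^sub>M PiM I (\<lambda>_. M)"
    using e by (intro measurable_restrict measurable_component_singleton) (auto simp: bij_betw_def)
  show ?thesis
  proof (rule PI.PiM_eqI[OF I])
    fix A assume A: "\<And>i. i \<in> I \<Longrightarrow> A i \<in> sets M"
    have "(\<lambda>x. \<lambda>i\<in>I. x (e i)) -` PiE I A \<inter> space (PiM J (\<lambda>_. M)) = PiE J (\<lambda>k. A (inv_into I e k))"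
    proof (intro equalityI subsetI)
      fix x assume "x \<in> (\<lambda>x. \<lambda>i\<in>I. x (e i)) -` PiE I A \<inter> space (PiM J (\<lambda>_. M))"
      then have x: "\<And>i. i \<in> I \<Longrightarrow> x (e i) \<in> A i" "x \<in> extensional J"
        by (auto simp: space_PiM PiE_def Pi_iff)
      show "x \<in> PiE J (\<lambda>k. A (inv_into I e k))"
      proof (rule PiE_I)
        fix k assume "k \<in> J"
        then show "x k \<in> A (inv_into I e k)" using inv x(1) by metis
      qed (use x(2) in \<open>auto simp: extensional_def\<close>)
    next
      fix x assume x: "x \<in> PiE J (\<lambda>k. A (inv_into I e k))"
      have "x (e i) \<in> A i" if "i \<in> I" for i
        using PiE_mem[OF x, of "e i"] bij_betwE[OF e] bij_betw_inv_into_left[OF e that] that by auto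
      moreover have "x k \<in> space M" if "k \<in> J" for k
        using PiE_mem[OF x that] inv[OF that] A[THEN sets.sets_into_space] by blast
      ultimately show "x \<in> (\<lambda>x. \<lambda>i\<in>I. x (e i)) -` PiE I A \<inter> space (PiM J (\<lambda>_. M))"
        using x by (auto simp: space_PiM PiE_def)
    qed
    then have "distr (PiM J (\<lambda>_. M)) (PiM I (\<lambda>_. M)) (\<lambda>x. \<lambda>i\<in>I. x (e i)) (PiE I A)
        = emeasure (PiM J (\<lambda>_. M)) (PiE J (\<lambda>k. A (inv_into I e k)))"
      using A I by (subst emeasure_distr[OF meas]) (auto intro!: sets_PiM_I_finite)
    also have "\<dots> = (\<Prod>k\<in>J. emeasure M (A (inv_into I e k)))"
      using A inv by (intro PJ.emeasure_PiM[OF J]) auto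
    also have "\<dots> = (\<Prod>i\<in>I. emeasure M (A i))"
      using prod.reindex_bij_betw[OF e, of "\<lambda>k. emeasure M (A (inv_into I e k))"] e
      by (simp add: bij_betw_inv_into_left)
    finally show "distr (PiM J (\<lambda>_. M)) (PiM I (\<lambda>_. M)) (\<lambda>x. \<lambda>i\<in>I. x (e i)) (PiE I A)
        = (\<Prod>i\<in>I. emeasure M (A i))" .
  qed simp
qed

lemma integral_PiM_bij_betw:
  fixes M :: "'a measure" and e :: "'i \<Rightarrow> 'j"
    and f :: "('i \<Rightarrow> 'a) \<Rightarrow> 'b::{banach, second_countable_topology}"
  assumes "sigma_finite_measure M" and e: "bij_betw e I J" and "finite I"
    and f: "f \<in> borel_measurable (PiM I (\<lambda>_. M))"
  shows "integral\<^sup>L (PiM I (\<lambda>_. M)) f = (\<integral>x. f (\<lambda>i\<in>I. x (e i)) \<partial>PiM J (\<lambda>_. M))"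
proof -
  have "(\<lambda>x. \<lambda>i\<in>I. x (e i)) \<in> PiM J (\<lambda>_. M) \<rightarrow>\<^sub>M PiM I (\<lambda>_. M)"
    using e by (intro measurable_restrict measurable_component_singleton) (auto simp: bij_betw_def)
  then show ?thesis
    by (subst distr_PiM_bij_betw[OF assms(1-3), symmetric]) (rule integral_distr[OF _ f])
qed

lemma bij_betw_omit_id:
  assumes "j \<le> Suc n"
  shows "bij_betw (omit j id) {..n} ({..Suc n} - {j})"
proof (rule bij_betw_imageI)
  show "inj_on (omit j id) {..n}" by (auto simp: inj_on_def omit_def split: if_splits)
  show "omit j id ` {..n} = {..Suc n} - {j}"
  proof (intro equalityI subsetI)
    fix k assume k: "k \<in> {..Suc n} - {j}"
    show "k \<in> omit j id ` {..n}"
    proof (cases "k < j")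
      case True
      then show ?thesis using k assms by (intro image_eqI[of _ _ k]) (auto simp: omit_def)
    next
      case False
      then show ?thesis using k by (intro image_eqI[of _ _ "k - 1"]) (auto simp: omit_def)
    qed
  qed (auto simp: omit_def)
qed

lemma omit_apply: "omit j a k = a (omit j id k)"
  by (simp add: omit_def)

lemma sum_atMost_Suc_omit:
  assumes "j \<le> Suc n"
  shows "(\<Sum>k\<le>Suc n. h k) = h j + (\<Sum>i\<le>n. h (omit j id i))"
proof -
  have "(\<Sum>k\<le>Suc n. h k) = h j + (\<Sum>k\<in>{..Suc n} - {j}. h k)"
    using assms by (subst sum.remove[of _ j]) auto
  also have "\<dots> = h j + (\<Sum>i\<le>n. h (omit j id i))"
    using sum.reindex_bij_betw[OF bij_betw_omit_id[OF assms], of h] by simp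
  finally show ?thesis .
qed

lemma sum_signed_minors_mult_eq_0:
  fixes a :: "nat \<Rightarrow> nat \<Rightarrow> 'a::comm_ring_1"
  assumes i: "i \<le> n"
  shows "(\<Sum>j\<le>Suc n. (-1)^j * Determinant.det (mat (Suc n) (Suc n) (\<lambda>(r, s). omit j a s r)) * a j i) = 0"
proof -
  \<comment> \<open>Put row i of the matrix with columns a 0, ..., a (Suc n) on top of it and expand along that row.\<close>
  define B where "B = mat (Suc (Suc n)) (Suc (Suc n)) (\<lambda>(r, s). if r = 0 then a s i else a s (r - 1))"
  have B: "B \<in> carrier_mat (Suc (Suc n)) (Suc (Suc n))" by (simp add: B_def)
  have "Determinant.det B = 0"
    by (rule det_identical_rows[OF B, of 0 "Suc i"]) (use i in \<open>auto simp: B_def intro!: eq_vecI\<close>)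
  moreover have "Determinant.det B = (\<Sum>s<Suc (Suc n). B $$ (0, s) * cofactor B 0 s)"
    by (rule laplace_expansion_row[OF B]) simp
  moreover have "mat_delete B 0 s = mat (Suc n) (Suc n) (\<lambda>(r, s'). omit s a s' r)" for s
    by (rule eq_matI) (auto simp: mat_delete_def B_def omit_def)
  ultimately show ?thesis
    by (simp add: lessThan_Suc_atMost cofactor_def B_def mult.commute)
qed

lemma sum_signed_minors_mult_bf_eq_0:
  "(\<Sum>j\<le>Suc n. (-1)^j * Determinant.det (mat (Suc n) (Suc n) (\<lambda>(r, s). omit j a s r)) * bf n (a j) b) = 0"
proof -
  have "(\<Sum>j\<le>Suc n. (-1)^j * Determinant.det (mat (Suc n) (Suc n) (\<lambda>(r, s). omit j a s r)) * bf n (a j) b)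
      = (\<Sum>i\<le>n. (\<Sum>j\<le>Suc n. (-1)^j * Determinant.det (mat (Suc n) (Suc n) (\<lambda>(r, s). omit j a s r)) * a j i) * b i)"
    unfolding bf_def sum_distrib_left sum_distrib_right by (subst sum.swap) (simp add: mult.assoc)
  also have "\<dots> = 0"
    by (intro sum.neutral ballI) (simp add: sum_signed_minors_mult_eq_0 del: sum.atMost_Suc)
  finally show ?thesis .
qed

definition qform :: "nat \<Rightarrow> (nat \<Rightarrow> nat \<Rightarrow> complex) \<Rightarrow> (nat \<Rightarrow> real) \<Rightarrow> complex" where
  "qform N g t = (\<Sum>k\<le>N. \<Sum>l\<le>N. g k l * complex_of_real (t k * t l))"

definition orthant :: "'i set \<Rightarrow> ('i \<Rightarrow> real) set" where
  "orthant I = PiE I (\<lambda>_. {0..})"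

abbreviation lborel_on :: "nat set \<Rightarrow> (nat \<Rightarrow> real) measure" where
  "lborel_on I \<equiv> PiM I (\<lambda>_. lborel)"

interpretation lborel_product: product_sigma_finite "\<lambda>_::nat. lborel :: real measure"
  by standard

lemma orthant_in_sets: "finite I \<Longrightarrow> orthant I \<in> sets (PiM I (\<lambda>_. lborel :: real measure))"
  unfolding orthant_def by (intro sets_PiM_I_finite) auto

lemma qform_measurable [measurable]: "qform N g \<in> borel_measurable (lborel_on {..N})"
  unfolding qform_def by measurable

lemma restrict_mem_orthant_iff:
  assumes "bij_betw e I J" "x \<in> extensional J"
  shows "(\<lambda>i\<in>I. x (e i)) \<in> orthant I \<longleftrightarrow> x \<in> orthant J"
  using assms by (auto simp: orthant_def PiE_iff bij_betw_def extensional_def)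

lemma fun_upd_mem_orthant_iff:
  assumes "j \<notin> J" "x \<in> extensional J"
  shows "x(j := y) \<in> orthant (insert j J) \<longleftrightarrow> 0 \<le> y \<and> x \<in> orthant J"
  using assms by (auto simp: orthant_def PiE_iff extensional_def)

lemma qform_fun_upd_omit:
  assumes "j \<le> Suc n"
  shows "qform (Suc n) g (x(j := 0)) = qform n (\<lambda>k l. g (omit j id k) (omit j id l)) (\<lambda>i\<in>{..n}. x (omit j id i))"
proof -
  let ?y = "x(j := 0)"
  have ne: "omit j id i \<noteq> j" for i by (simp add: omit_def)
  have "qform (Suc n) g ?y = (\<Sum>i\<le>n. \<Sum>l\<le>Suc n. g (omit j id i) l * of_real (?y (omit j id i) * ?y l))"
    unfolding qform_def by (subst sum_atMost_Suc_omit[OF assms]) simp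
  also have "\<dots> = (\<Sum>i\<le>n. \<Sum>k\<le>n. g (omit j id i) (omit j id k) * of_real (?y (omit j id i) * ?y (omit j id k)))"
    by (rule sum.cong[OF refl]) (subst sum_atMost_Suc_omit[OF assms], simp)
  also have "\<dots> = qform n (\<lambda>k l. g (omit j id k) (omit j id l)) (\<lambda>i\<in>{..n}. x (omit j id i))"
    unfolding qform_def by (intro sum.cong refl) (simp add: ne)
  finally show ?thesis .
qed

lemma set_integral_orthant_omit:
  fixes g :: "nat \<Rightarrow> nat \<Rightarrow> complex"
  assumes j: "j \<le> Suc n"
  shows "(LINT t:orthant {..n}|lborel_on {..n}. exp (- qform n (\<lambda>k l. g (omit j id k) (omit j id l)) t))
       = (LINT x:orthant ({..Suc n} - {j})|lborel_on ({..Suc n} - {j}). exp (- qform (Suc n) g (x(j := 0))))"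
proof -
  have e: "bij_betw (omit j id) {..n} ({..Suc n} - {j})" by (rule bij_betw_omit_id[OF j])
  have "(\<lambda>t. indicator (orthant {..n}) t *\<^sub>R exp (- qform n (\<lambda>k l. g (omit j id k) (omit j id l)) t))
      \<in> borel_measurable (lborel_on {..n})"
    by (intro borel_measurable_scaleR borel_measurable_indicator orthant_in_sets) auto
  then show ?thesis
    unfolding set_lebesgue_integral_def
    by (subst integral_PiM_bij_betw[OF sigma_finite_lborel e]) (auto intro!: Bochner_Integration.integral_cong
        simp: space_PiM PiE_iff restrict_mem_orthant_iff[OF e] qform_fun_upd_omit[OF j] indicator_def)
qed

lemma Re_qform_ge:
  assumes "\<And>k l. k \<le> N \<Longrightarrow> l \<le> N \<Longrightarrow> m \<le> Re (g k l)" and "\<And>k. k \<le> N \<Longrightarrow> 0 \<le> t k"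
  shows "m * (\<Sum>k\<le>N. t k)^2 \<le> Re (qform N g t)"
proof -
  have "(\<Sum>k\<le>N. t k)^2 = (\<Sum>k\<le>N. \<Sum>l\<le>N. t k * t l)"
    by (simp add: power2_eq_square sum_product)
  then have "m * (\<Sum>k\<le>N. t k)^2 = (\<Sum>k\<le>N. \<Sum>l\<le>N. m * (t k * t l))"
    by (simp add: sum_distrib_left)
  also have "\<dots> \<le> (\<Sum>k\<le>N. \<Sum>l\<le>N. Re (g k l) * (t k * t l))"
    using assms by (intro sum_mono mult_right_mono) auto
  also have "\<dots> = Re (qform N g t)"
    by (simp add: qform_def Re_sum)
  finally show ?thesis .
qed

lemma exp_neg_square_le:
  fixes m s :: real
  assumes "0 < m"
  shows "exp (- m * s^2) \<le> exp (1/m) * exp (- 2 * s)"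
proof -
  have "0 \<le> (m * s - 1)^2 / m" using assms by simp
  then have "- m * s^2 \<le> 1/m - 2 * s" using assms by (simp add: field_simps power2_eq_square)
  then show ?thesis by (simp flip: exp_add)
qed

lemma mult_exp_neg_le: "(s::real) * exp (- 2 * s) \<le> exp (- s)"
proof -
  have "s \<le> exp s" using exp_ge_add_one_self[of s] by linarith
  then have "s * exp (- 2 * s) \<le> exp s * exp (- 2 * s)"
    by (intro mult_right_mono) auto
  then show ?thesis by (simp flip: exp_add)
qed

lemma set_integrable_Ioi_exp_bound:
  fixes f :: "real \<Rightarrow> 'a::{banach, second_countable_topology}"
  assumes f: "f \<in> borel_measurable borel" and bound: "\<And>y. 0 \<le> y \<Longrightarrow> norm (f y) \<le> C * exp (- y)"
  shows "set_integrable lborel {0<..} f"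
proof (rule set_integrable_bound)
  show "set_integrable lborel {0<..} (\<lambda>y. C * exp (- y))"
    using integrable_I0i_exp_mscale[of 1] by simp
  show "set_borel_measurable lborel {0<..} f"
    using f by (simp add: set_borel_measurable_def)
  show "AE y in lborel. y \<in> {0<..} \<longrightarrow> norm (f y) \<le> norm (C * exp (- y))"
    using bound by (intro AE_I2 impI order_trans[OF bound]) auto
qed

lemma tendsto_0_exp_bound:
  fixes f :: "real \<Rightarrow> 'a::real_normed_vector"
  assumes "\<And>y. 0 \<le> y \<Longrightarrow> norm (f y) \<le> C * exp (- y)"
  shows "(f \<longlongrightarrow> 0) at_top"
proof (rule Lim_null_comparison)
  show "\<forall>\<^sub>F y in at_top. norm (f y) \<le> C * exp (- y)"
    using eventually_ge_at_top[of "0::real"] by eventually_elim (rule assms)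
  have "((\<lambda>y::real. exp (- y)) \<longlongrightarrow> 0) at_top"
    using filterlim_compose[OF exp_at_bot filterlim_uminus_at_bot_at_top] by simp
  then show "((\<lambda>y. C * exp (- y)) \<longlongrightarrow> 0) at_top"
    by (rule tendsto_mult_right_zero)
qed

lemma set_integral_atLeast_0_FTC:
  fixes F f :: "real \<Rightarrow> 'a::euclidean_space"
  assumes deriv: "\<And>y. (F has_vector_derivative f y) (at y)" and cont: "\<And>y. isCont f y"
    and int: "set_integrable lborel {0<..} f" and lim: "(F \<longlongrightarrow> 0) at_top"
  shows "(LINT y:{0..}|lborel. f y) = - F 0"
proof -
  have f: "f \<in> borel_measurable borel"
    using cont by (intro borel_measurable_continuous_onI continuous_at_imp_continuous_on) auto
  have "(LBINT y=ereal 0..\<infinity>. f y) = 0 - F 0"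
  proof (rule interval_integral_FTC_integrable)
    show "set_integrable lborel (einterval (ereal 0) \<infinity>) f"
      using int by (simp add: einterval_def greaterThan_def)
    have "isCont F 0" using has_vector_derivative_continuous[OF deriv] .
    then show "((F \<circ> real_of_ereal) \<longlongrightarrow> F 0) (at_right (ereal 0))"
      unfolding ereal_tendsto_simps1 by (simp add: isCont_def filterlim_at_split)
    show "((F \<circ> real_of_ereal) \<longlongrightarrow> 0) (at_left \<infinity>)"
      unfolding ereal_tendsto_simps1 by (rule lim)
  qed (auto intro: deriv cont)
  then have "(LINT y:{0<..}|lborel. f y) = - F 0"
    by (simp add: interval_integral_to_infinity_eq)
  moreover have "(LINT y:{0<..}|lborel. f y) = (LINT y:{0..}|lborel. f y)"
    using f AE_lborel_singleton[of 0]
    by (intro set_integral_cong_set) (auto simp: set_borel_measurable_def elim!: eventually_mono)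
  ultimately show ?thesis by simp
qed

locale Re_pos_sym_form =
  fixes N :: nat and g :: "nat \<Rightarrow> nat \<Rightarrow> complex"
  assumes sym: "g k l = g l k"
    and Re_pos: "k \<le> N \<Longrightarrow> l \<le> N \<Longrightarrow> 0 < Re (g k l)"
begin

definition gauss :: "(nat \<Rightarrow> real) \<Rightarrow> complex" where
  "gauss t = exp (- qform N g t)"

definition lin :: "nat \<Rightarrow> (nat \<Rightarrow> real) \<Rightarrow> complex" where
  "lin j t = (\<Sum>l\<le>N. g j l * complex_of_real (t l))"

definition gauss_deriv :: "nat \<Rightarrow> (nat \<Rightarrow> real) \<Rightarrow> complex" where
  "gauss_deriv j t = - 2 * lin j t * gauss t"

lemma Re_ge_uniform:
  obtains m where "0 < m" "\<And>k l. k \<le> N \<Longrightarrow> l \<le> N \<Longrightarrow> m \<le> Re (g k l)"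
proof -
  define R where "R = (\<lambda>(k, l). Re (g k l)) ` ({..N} \<times> {..N})"
  have "finite R" "R \<noteq> {}" by (auto simp: R_def)
  then show ?thesis
    using Re_pos by (intro that[of "Min R"]) (auto simp: R_def Min_gr_iff intro!: Min_le)
qed

lemma norm_lin_le:
  assumes "\<And>k. k \<le> N \<Longrightarrow> 0 \<le> t k"
  shows "norm (lin j t) \<le> (\<Sum>l\<le>N. norm (g j l)) * (\<Sum>k\<le>N. t k)"
proof -
  have "norm (lin j t) \<le> (\<Sum>l\<le>N. norm (g j l) * t l)"
    unfolding lin_def using assms by (intro order_trans[OF norm_sum] sum_mono) (simp add: norm_mult)
  also have "\<dots> \<le> (\<Sum>l\<le>N. norm (g j l) * (\<Sum>k\<le>N. t k))"
    using assms by (intro sum_mono mult_left_mono member_le_sum) auto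
  finally show ?thesis by (simp add: sum_distrib_right)
qed

lemma norm_gauss_le:
  assumes "\<And>k l. k \<le> N \<Longrightarrow> l \<le> N \<Longrightarrow> m \<le> Re (g k l)" and "\<And>k. k \<le> N \<Longrightarrow> 0 \<le> t k"
  shows "norm (gauss t) \<le> exp (- m * (\<Sum>k\<le>N. t k)^2)"
  using Re_qform_ge[OF assms] by (simp add: gauss_def norm_exp_eq_Re)

lemma gauss_bound:
  obtains C where "0 \<le> C"
    "\<And>t. (\<And>k. k \<le> N \<Longrightarrow> 0 \<le> t k) \<Longrightarrow> norm (gauss t) \<le> C * exp (- (\<Sum>k\<le>N. t k))"
proof -
  obtain m where m: "0 < m" "\<And>k l. k \<le> N \<Longrightarrow> l \<le> N \<Longrightarrow> m \<le> Re (g k l)"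
    by (rule Re_ge_uniform) blast
  show ?thesis
  proof (rule that)
    fix t :: "nat \<Rightarrow> real" assume t: "\<And>k. k \<le> N \<Longrightarrow> 0 \<le> t k"
    define s where "s = (\<Sum>k\<le>N. t k)"
    have "0 \<le> s" unfolding s_def by (rule sum_nonneg) (simp add: t)
    have "norm (gauss t) \<le> exp (- m * s^2)"
      unfolding s_def by (rule norm_gauss_le[OF m(2) t])
    also have "\<dots> \<le> exp (1/m) * exp (- 2 * s)"
      by (rule exp_neg_square_le[OF m(1)])
    also have "\<dots> \<le> exp (1/m) * exp (- s)"
      using \<open>0 \<le> s\<close> by simp
    finally show "norm (gauss t) \<le> exp (1/m) * exp (- s)" .
  qed simp
qed

lemma gauss_deriv_bound:
  obtains C where "0 \<le> C"
    "\<And>t. (\<And>k. k \<le> N \<Longrightarrow> 0 \<le> t k) \<Longrightarrow> norm (gauss_deriv j t) \<le> C * exp (- (\<Sum>k\<le>N. t k))"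
proof -
  obtain m where m: "0 < m" "\<And>k l. k \<le> N \<Longrightarrow> l \<le> N \<Longrightarrow> m \<le> Re (g k l)"
    by (rule Re_ge_uniform) blast
  define G where "G = (\<Sum>l\<le>N. norm (g j l))"
  have "0 \<le> G" by (simp add: G_def sum_nonneg)
  show ?thesis
  proof (rule that)
    fix t :: "nat \<Rightarrow> real" assume t: "\<And>k. k \<le> N \<Longrightarrow> 0 \<le> t k"
    define s where "s = (\<Sum>k\<le>N. t k)"
    have "0 \<le> s" unfolding s_def by (rule sum_nonneg) (simp add: t)
    have "norm (gauss_deriv j t) = 2 * norm (lin j t) * norm (gauss t)"
      by (simp add: gauss_deriv_def norm_mult)
    also have "\<dots> \<le> 2 * (G * s) * exp (- m * s^2)"
      using norm_lin_le[OF t] norm_gauss_le[OF m(2) t] \<open>0 \<le> G\<close> \<open>0 \<le> s\<close>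
      by (intro mult_mono mult_left_mono) (auto simp: G_def s_def)
    also have "\<dots> \<le> 2 * (G * s) * (exp (1/m) * exp (- 2 * s))"
      using \<open>0 \<le> G\<close> \<open>0 \<le> s\<close> exp_neg_square_le[OF m(1)] by (intro mult_left_mono) auto
    also have "\<dots> = 2 * G * exp (1/m) * (s * exp (- 2 * s))"
      by simp
    also have "\<dots> \<le> 2 * G * exp (1/m) * exp (- s)"
      using \<open>0 \<le> G\<close> mult_exp_neg_le by (intro mult_left_mono) auto
    finally show "norm (gauss_deriv j t) \<le> 2 * G * exp (1/m) * exp (- s)" .
  qed (use \<open>0 \<le> G\<close> in simp)
qed

lemma qform_eq_sum_lin: "qform N g t = (\<Sum>k\<le>N. complex_of_real (t k) * lin k t)"
  by (simp add: qform_def lin_def sum_distrib_left algebra_simps)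

lemma lin_fun_upd:
  assumes "j \<le> N"
  shows "lin i (x(j := y)) = lin i (x(j := 0)) + g i j * complex_of_real y"
proof -
  have "lin i (x(j := y))
      = (\<Sum>l\<le>N. g i l * complex_of_real ((x(j := 0)) l) + (if l = j then g i j * complex_of_real y else 0))"
    unfolding lin_def by (intro sum.cong) auto
  also have "\<dots> = lin i (x(j := 0)) + g i j * complex_of_real y"
    using assms by (simp add: sum.distrib lin_def)
  finally show ?thesis .
qed

lemma qform_fun_upd:
  assumes j: "j \<le> N"
  shows "qform N g (x(j := y))
    = qform N g (x(j := 0)) + 2 * lin j (x(j := 0)) * complex_of_real y + g j j * complex_of_real y ^ 2"
proof -
  let ?u = "x(j := 0)" and ?y = "complex_of_real y"
  have cross: "(\<Sum>k\<le>N. complex_of_real (?u k) * g k j * ?y) = lin j ?u * ?y"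
    unfolding lin_def sum_distrib_right by (intro sum.cong refl) (subst sym, simp add: mult_ac)
  have "qform N g (x(j := y)) = (\<Sum>k\<le>N. complex_of_real ((x(j := y)) k) * (lin k ?u + g k j * ?y))"
    by (simp add: qform_eq_sum_lin[of "x(j := y)"] lin_fun_upd[OF j, of _ x y])
  also have "\<dots> = (\<Sum>k\<le>N. complex_of_real (?u k) * lin k ?u + complex_of_real (?u k) * g k j * ?y
      + (if k = j then ?y * lin j ?u + g j j * ?y ^ 2 else 0))"
    by (intro sum.cong refl) (auto simp: algebra_simps power2_eq_square)
  also have "\<dots> = qform N g ?u + lin j ?u * ?y + (?y * lin j ?u + g j j * ?y ^ 2)"
    using j by (simp only: sum.distrib qform_eq_sum_lin[of ?u] cross sum.delta finite_atMost) simp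
  finally show ?thesis
    by (simp add: algebra_simps)
qed

lemma gauss_fun_upd:
  assumes "j \<le> N"
  shows "gauss (x(j := y)) = exp (- (qform N g (x(j := 0)) + 2 * lin j (x(j := 0)) * complex_of_real y
    + g j j * complex_of_real y ^ 2))"
  by (simp add: gauss_def qform_fun_upd[OF assms, of x y])

lemma gauss_deriv_fun_upd:
  assumes "j \<le> N"
  shows "gauss_deriv j (x(j := y)) = - (2 * lin j (x(j := 0)) + g j j * (2 * complex_of_real y)) *
    exp (- (qform N g (x(j := 0)) + 2 * lin j (x(j := 0)) * complex_of_real y + g j j * complex_of_real y ^ 2))"
  by (simp add: gauss_deriv_def gauss_fun_upd[OF assms] lin_fun_upd[OF assms, of j x y] algebra_simps)

lemma gauss_fun_upd_has_vector_derivative: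
  assumes j: "j \<le> N"
  shows "((\<lambda>y. gauss (x(j := y))) has_vector_derivative gauss_deriv j (x(j := y))) (at y)"
proof -
  let ?u = "x(j := 0)"
  define h where "h z = exp (- (qform N g ?u + 2 * lin j ?u * z + g j j * z ^ 2))" for z :: complex
  have "(h has_field_derivative - (2 * lin j ?u + g j j * (2 * complex_of_real y)) * h (complex_of_real y))
      (at (complex_of_real y))"
    unfolding h_def by (auto intro!: derivative_eq_intros)
  then have "((\<lambda>y. h (complex_of_real y)) has_vector_derivative
      - (2 * lin j ?u + g j j * (2 * complex_of_real y)) * h (complex_of_real y)) (at y)"
    by (rule has_vector_derivative_real_field)
  then show ?thesis
    unfolding gauss_fun_upd[OF j] gauss_deriv_fun_upd[OF j] h_def .
qed

lemma isCont_gauss_deriv_fun_upd: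
  assumes j: "j \<le> N"
  shows "isCont (\<lambda>y. gauss_deriv j (x(j := y))) y"
  unfolding gauss_deriv_fun_upd[OF j] by (intro continuous_intros)

lemma set_integral_gauss_deriv_fun_upd:
  assumes j: "j \<le> N" and x: "\<And>k. k \<le> N \<Longrightarrow> k \<noteq> j \<Longrightarrow> 0 \<le> x k"
  shows "(LINT y:{0..}|lborel. gauss_deriv j (x(j := y))) = - gauss (x(j := 0))"
proof -
  have nonneg: "0 \<le> (x(j := y)) k" if "0 \<le> y" "k \<le> N" for y k
    using x that by simp
  have exp_le: "C * exp (- (\<Sum>k\<le>N. (x(j := y)) k)) \<le> C * exp (- y)" if "0 \<le> C" "0 \<le> y" for C y
  proof -
    have "(x(j := y)) j \<le> (\<Sum>k\<le>N. (x(j := y)) k)"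
      using j x by (intro member_le_sum) auto
    then show ?thesis
      using \<open>0 \<le> C\<close> by (intro mult_left_mono) auto
  qed
  obtain C where "0 \<le> C"
    "\<And>t. (\<And>k. k \<le> N \<Longrightarrow> 0 \<le> t k) \<Longrightarrow> norm (gauss t) \<le> C * exp (- (\<Sum>k\<le>N. t k))"
    by (rule gauss_bound) blast
  then have gauss_le: "norm (gauss (x(j := y))) \<le> C * exp (- y)" if "0 \<le> y" for y
    using nonneg[OF that] exp_le[OF _ that] order_trans by blast
  obtain C' where "0 \<le> C'"
    "\<And>t. (\<And>k. k \<le> N \<Longrightarrow> 0 \<le> t k) \<Longrightarrow> norm (gauss_deriv j t) \<le> C' * exp (- (\<Sum>k\<le>N. t k))"
    by (rule gauss_deriv_bound) blast
  then have gauss_deriv_le: "norm (gauss_deriv j (x(j := y))) \<le> C' * exp (- y)" if "0 \<le> y" for y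
    using nonneg[OF that] exp_le[OF _ that] order_trans by blast
  show ?thesis
  proof (rule set_integral_atLeast_0_FTC)
    show "((\<lambda>y. gauss (x(j := y))) has_vector_derivative gauss_deriv j (x(j := y))) (at y)" for y
      by (rule gauss_fun_upd_has_vector_derivative[OF j])
    show cont: "isCont (\<lambda>y. gauss_deriv j (x(j := y))) y" for y
      by (rule isCont_gauss_deriv_fun_upd[OF j])
    have "(\<lambda>y. gauss_deriv j (x(j := y))) \<in> borel_measurable borel"
      using cont by (intro borel_measurable_continuous_onI continuous_at_imp_continuous_on) auto
    then show "set_integrable lborel {0<..} (\<lambda>y. gauss_deriv j (x(j := y)))"
      using gauss_deriv_le by (rule set_integrable_Ioi_exp_bound)
    show "((\<lambda>y. gauss (x(j := y))) \<longlongrightarrow> 0) at_top"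
      using gauss_le by (rule tendsto_0_exp_bound)
  qed
qed

lemma gauss_deriv_measurable: "gauss_deriv j \<in> borel_measurable (lborel_on {..N})"
  unfolding gauss_deriv_def gauss_def lin_def by measurable

lemma set_integrable_gauss_deriv: "set_integrable (lborel_on {..N}) (orthant {..N}) (gauss_deriv j)"
proof -
  obtain C where "0 \<le> C" and C:
    "\<And>t. (\<And>k. k \<le> N \<Longrightarrow> 0 \<le> t k) \<Longrightarrow> norm (gauss_deriv j t) \<le> C * exp (- (\<Sum>k\<le>N. t k))"
    by (rule gauss_deriv_bound) blast
  let ?h = "\<lambda>y::real. exp (- y) * indicator {0..} y"
  have "integrable lborel ?h"
    using integrable.intros[OF has_bochner_integral_I0i_power_exp_m'[of 0]] by simp
  then have "integrable (lborel_on {..N}) (\<lambda>t. C * (\<Prod>k\<le>N. ?h (t k)))"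
    by (intro integrable_mult_right lborel_product.product_integrable_prod) auto
  then show ?thesis
    unfolding set_integrable_def
  proof (rule Bochner_Integration.integrable_bound)
    show "(\<lambda>t. indicator (orthant {..N}) t *\<^sub>R gauss_deriv j t) \<in> borel_measurable (lborel_on {..N})"
      by (intro borel_measurable_scaleR borel_measurable_indicator orthant_in_sets gauss_deriv_measurable) auto
    have "norm (indicator (orthant {..N}) t *\<^sub>R gauss_deriv j t) \<le> norm (C * (\<Prod>k\<le>N. ?h (t k)))" for t
    proof (cases "t \<in> orthant {..N}")
      case True
      then have t: "\<And>k. k \<le> N \<Longrightarrow> 0 \<le> t k" by (auto simp: orthant_def)
      have "norm (indicator (orthant {..N}) t *\<^sub>R gauss_deriv j t) \<le> C * exp (- (\<Sum>k\<le>N. t k))"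
        using True C[OF t] by simp
      also have "\<dots> = C * (\<Prod>k\<le>N. ?h (t k))"
        using t by (simp add: exp_sum flip: sum_negf)
      finally show ?thesis by simp
    qed simp
    then show "AE t in lborel_on {..N}. norm (indicator (orthant {..N}) t *\<^sub>R gauss_deriv j t)
        \<le> norm (C * (\<Prod>k\<le>N. ?h (t k)))"
      by simp
  qed
qed

lemma set_integral_gauss_deriv_orthant:
  assumes j: "j \<le> N"
  shows "(LINT t:orthant {..N}|lborel_on {..N}. gauss_deriv j t)
       = - (LINT x:orthant ({..N} - {j})|lborel_on ({..N} - {j}). gauss (x(j := 0)))"
proof -
  define J where "J = {..N} - {j}"
  have N: "{..N} = insert j J" "j \<notin> J" "finite J"
    using j by (auto simp: J_def)
  have "(LINT t:orthant {..N}|lborel_on {..N}. gauss_deriv j t)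
      = (\<integral>x. (\<integral>y. indicator (orthant {..N}) (x(j := y)) *\<^sub>R gauss_deriv j (x(j := y)) \<partial>lborel) \<partial>lborel_on J)"
    using set_integrable_gauss_deriv[of j] unfolding set_lebesgue_integral_def set_integrable_def N(1)
    by (rule lborel_product.product_integral_insert[OF N(3) N(2)])
  also have "\<dots> = (\<integral>x. - (indicator (orthant J) x *\<^sub>R gauss (x(j := 0))) \<partial>lborel_on J)"
  proof (rule Bochner_Integration.integral_cong[OF refl])
    fix x assume "x \<in> space (lborel_on J)"
    then have x: "x \<in> extensional J" by (simp add: space_PiM PiE_iff)
    show "(\<integral>y. indicator (orthant {..N}) (x(j := y)) *\<^sub>R gauss_deriv j (x(j := y)) \<partial>lborel)
        = - (indicator (orthant J) x *\<^sub>R gauss (x(j := 0)))"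
    proof (cases "x \<in> orthant J")
      case True
      then have "\<And>k. k \<le> N \<Longrightarrow> k \<noteq> j \<Longrightarrow> 0 \<le> x k"
        by (auto simp: orthant_def J_def)
      from set_integral_gauss_deriv_fun_upd[OF j this] show ?thesis
        using True by (simp add: set_lebesgue_integral_def N(1) fun_upd_mem_orthant_iff[OF N(2) x] indicator_def)
    qed (simp add: N(1) fun_upd_mem_orthant_iff[OF N(2) x])
  qed
  finally show ?thesis
    by (simp add: set_lebesgue_integral_def J_def)
qed

lemma sum_face_integrals_eq_0:
  assumes kernel: "\<And>l. l \<le> N \<Longrightarrow> (\<Sum>j\<le>N. c j * g j l) = 0"
  shows "(\<Sum>j\<le>N. c j * (LINT x:orthant ({..N} - {j})|lborel_on ({..N} - {j}). gauss (x(j := 0)))) = 0"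
proof -
  have div_free: "(\<Sum>j\<le>N. c j * gauss_deriv j t) = 0" for t
  proof -
    have "(\<Sum>j\<le>N. c j * lin j t) = (\<Sum>l\<le>N. (\<Sum>j\<le>N. c j * g j l) * complex_of_real (t l))"
      unfolding lin_def sum_distrib_left sum_distrib_right by (subst sum.swap) (simp add: mult.assoc)
    also have "\<dots> = 0"
      by (simp add: kernel)
    moreover have "(\<Sum>j\<le>N. c j * gauss_deriv j t) = - 2 * gauss t * (\<Sum>j\<le>N. c j * lin j t)"
      by (simp add: gauss_deriv_def sum_distrib_left mult_ac)
    ultimately show ?thesis
      by simp
  qed
  have "set_integrable (lborel_on {..N}) (orthant {..N}) (\<lambda>t. c j * gauss_deriv j t)" for j
    by (intro set_integrable_mult_right set_integrable_gauss_deriv)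
  then have "(LINT t:orthant {..N}|lborel_on {..N}. (\<Sum>j\<le>N. c j * gauss_deriv j t))
      = (\<Sum>j\<le>N. (LINT t:orthant {..N}|lborel_on {..N}. c j * gauss_deriv j t))"
    unfolding set_lebesgue_integral_def set_integrable_def scaleR_sum_right
    by (intro Bochner_Integration.integral_sum)
  then show ?thesis
    by (simp add: div_free set_integral_gauss_deriv_orthant sum_negf)
qed

end

lemma Re_pos_sym_form_bf:
  assumes "\<And>j k. j \<le> N \<Longrightarrow> k \<le> N \<Longrightarrow> cmod (bf n (a j) (a k) - 1) < 1"
  shows "Re_pos_sym_form N (\<lambda>j k. bf n (a j) (a k))"
proof
  show "bf n (a k) (a l) = bf n (a l) (a k)" for k l
    by (simp add: bf_def mult.commute)
  fix k l assume "k \<le> N" "l \<le> N"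
  then have "\<bar>Re (bf n (a k) (a l) - 1)\<bar> < 1"
    using assms abs_Re_le_cmod le_less_trans by blast
  then show "0 < Re (bf n (a k) (a l))"
    by simp
qed

theorem lemma2:
  fixes n :: nat and a :: "nat \<Rightarrow> nat \<Rightarrow> complex"
  assumes "\<And>j. j \<le> Suc n \<Longrightarrow> a j \<in> Qset n"
    and "\<And>j k. j \<le> Suc n \<Longrightarrow> k \<le> Suc n \<Longrightarrow> cmod (bf n (a j) (a k) - 1) < 1"
  shows "(\<Sum>j\<le>Suc n. (-1) ^ j * Fint n (omit j a)) = 0"
proof -
  define g where "g k l = bf n (a k) (a l)" for k l
  define D where "D j = Determinant.det (mat (Suc n) (Suc n) (\<lambda>(i, k). omit j a k i))" for j
  interpret Re_pos_sym_form "Suc n" g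
    unfolding g_def using assms(2) by (rule Re_pos_sym_form_bf)
  have kernel: "(\<Sum>j\<le>Suc n. (-1)^j * D j * g j l) = 0" for l
    unfolding D_def g_def by (rule sum_signed_minors_mult_bf_eq_0)
  have face: "Fint n (omit j a)
      = D j * (LINT x:orthant ({..Suc n} - {j})|lborel_on ({..Suc n} - {j}). gauss (x(j := 0)))"
    if "j \<le> Suc n" for j
    using set_integral_orthant_omit[OF that, of g]
    by (simp add: Fint_def D_def gauss_def qform_def orthant_def g_def omit_apply[of j a])
  show ?thesis
    using sum_face_integrals_eq_0[of "\<lambda>j. (-1)^j * D j", OF kernel] by (simp add: face mult.assoc)
qed

end
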